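(* Let $(\mathcal L,\mathcal M,\mathcal P)$ be a solution of the dispersionless $N$-modified KP hierarchy, with $v_m$ the coefficients of $\mathcal M$. Then $\mathcal P$ has the following expansion in powers of $\mathcal L$: \[ \mathcal P=\mathcal L^N\exp\Bigl(\sum_{m\ge1}\frac{-1}{m}\frac{\partial v_m}{\partial s}\mathcal L^{-m}\Bigr). \]
   Context: Fix a positive integer $N$. Let $x,s$ be variables and $t=(t_1,t_2,\dots)$. Consider formal Laurent series in $k$ with coefficients depending on $(x,t,s)$: $\mathcal L=k+\sum_{n\ge2}u_n(t;s)k^{1-n}$, $\mathcal M=\sum_{n\ge1}nt_n\mathcal L^{n-1}+x+Ns\mathcal L^{-1}+\sum_{i\ge1}v_i(t;s)\mathcal L^{-i-1}$, and the polynomial $\mathcal P=k^N+p_{N-1}k^{N-1}+\dots+p_0$. The Poisson bracket is $\{F,G\}=\frac{\partial F}{\partial k}\frac{\partial G}{\partial x}-\frac{\partial F}{\partial x}\frac{\partial G}{\partial k}$. For a Laurent series in $k$, $(\cdot)_{\ge0}$ is the polynomial part and $(\cdot)_{<0}$ the part with negative powers; $\mathcal B_n=(\mathcal L^n)_{\ge0}$. The dispersionless $N$-modified KP hierarchy is the system: $\partial\mathcal L/\partial t_n=\{\mathcal B_n,\mathcal L\}$, $\partial\mathcal M/\partial t_n=\{\mathcal B_n,\mathcal M\}$ ($n\ge1$), $\{\mathcal L,\mathcal M\}=1$, $(\partial\mathcal L/\partial s)\mathcal P=\{\mathcal P,\mathcal L\}$, $(\partial\mathcal M/\partial s)\mathcal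 P=\{\mathcal P,\mathcal M\}$, $-(\partial\mathcal B_n/\partial s)\mathcal P=-\partial\mathcal P/\partial t_n-\{\mathcal P,\mathcal B_n\}$ ($n\ge1$). *)

theory Defs
  imports "HOL-Analysis.Analysis" "HOL-Computational_Algebra.Formal_Laurent_Series"
begin

text \<open>A point is (x, t, s) with t :: nat => real; t n is the time t_n for n >= 1
(t 0 is an unused dummy).  The t-variables are restricted to finitely supported sequences, so
that the sum over n of n t_n L^(n-1) in M is a finite sum.
A formal Laurent series in k with finitely many positive and infinitely many negative powers of
k is represented as a real fls in the variable z = k^(-1); so k = fls_X_inv, k^j = fls_X_intpow (-j).\<close>

type_synonym pt = "real \<times> (nat \<Rightarrow> real) \<times> real"

definition ptdom :: "pt set" where
  "ptdom = {(x, t, s). finite {n. t n \<noteq> 0}}"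

datatype var = VX | VS | VT nat

fun setv :: "var \<Rightarrow> pt \<Rightarrow> real \<Rightarrow> pt" where
  "setv VX (x, t, s) y = (y, t, s)"
| "setv VS (x, t, s) y = (x, t, y)"
| "setv (VT n) (x, t, s) y = (x, t(n := y), s)"

fun getv :: "var \<Rightarrow> pt \<Rightarrow> real" where
  "getv VX (x, t, s) = x"
| "getv VS (x, t, s) = s"
| "getv (VT n) (x, t, s) = t n"

definition admissible :: "var \<Rightarrow> bool" where
  "admissible w \<longleftrightarrow> (\<forall>n. w = VT n \<longrightarrow> 1 \<le> n)"

definition pder :: "var \<Rightarrow> (pt \<Rightarrow> real) \<Rightarrow> pt \<Rightarrow> real" where
  "pder w f p = deriv (\<lambda>y. f (setv w p y)) (getv w p)"

definition pdiffble :: "var \<Rightarrow> (pt \<Rightarrow> real) \<Rightarrow> pt \<Rightarrow> bool" where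
  "pdiffble w f p \<longleftrightarrow> (\<lambda>y. f (setv w p y)) differentiable (at (getv w p))"

definition fpder :: "var \<Rightarrow> (pt \<Rightarrow> real fls) \<Rightarrow> pt \<Rightarrow> real fls" where
  "fpder w F p = Abs_fls (\<lambda>j. pder w (\<lambda>q. fls_nth (F q) j) p)"

text \<open>d/dk = - z^2 d/dz.\<close>
definition dk :: "real fls \<Rightarrow> real fls" where
  "dk A = - (fls_X ^ 2) * fls_deriv A"

definition pbr :: "(pt \<Rightarrow> real fls) \<Rightarrow> (pt \<Rightarrow> real fls) \<Rightarrow> pt \<Rightarrow> real fls" where
  "pbr F G p = dk (F p) * fpder VX G p - fpder VX F p * dk (G p)"

text \<open>Polynomial part in k (nonnegative powers of k = nonpositive powers of z).\<close>
definition kpos :: "real fls \<Rightarrow> real fls" where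
  "kpos A = A - fps_to_fls (fls_regpart A) + fls_const (fls_nth A 0)"

text \<open>L = k + sum_{n>=2} u_n k^(1-n).\<close>
definition Lser :: "(nat \<Rightarrow> pt \<Rightarrow> real) \<Rightarrow> pt \<Rightarrow> real fls" where
  "Lser u p = fls_X_inv + fps_to_fls (Abs_fps (\<lambda>j. if j = 0 then 0 else u (j + 1) p))"

definition Pser :: "nat \<Rightarrow> (nat \<Rightarrow> pt \<Rightarrow> real) \<Rightarrow> pt \<Rightarrow> real fls" where
  "Pser N pc p = fls_X_intpow (- int N) + (\<Sum>j<N. fls_const (pc j p) * fls_X_intpow (- int j))"

text \<open>L^(-1) as a power series in z (it has z-valuation 1).\<close>
definition Wser :: "real fls \<Rightarrow> real fps" where
  "Wser L = fls_regpart (inverse L)"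

text \<open>sum_{i>=1} c_i L^(-i-1) = L^(-1) * sum_{i>=1} c_i (L^(-1))^i.\<close>
definition negsum :: "(nat \<Rightarrow> real) \<Rightarrow> real fls \<Rightarrow> real fls" where
  "negsum c L = inverse L * fps_to_fls (Abs_fps (\<lambda>i. if i = 0 then 0 else c i) oo Wser L)"

text \<open>M = sum_{n>=1} n t_n L^(n-1) + x + N s L^(-1) + sum_{i>=1} v_i L^(-i-1).\<close>
definition Mser :: "nat \<Rightarrow> (nat \<Rightarrow> pt \<Rightarrow> real) \<Rightarrow> (nat \<Rightarrow> pt \<Rightarrow> real) \<Rightarrow> pt \<Rightarrow> real fls" where
  "Mser N u v p = (case p of (x, t, s) \<Rightarrow>
      (\<Sum>n\<in>{n. 1 \<le> n \<and> t n \<noteq> 0}. fls_const (of_nat n * t n) * (Lser u p) ^ (n - 1))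
      + fls_const x + fls_const (of_nat N * s) * inverse (Lser u p)
      + negsum (\<lambda>i. v i p) (Lser u p))"

definition Bser :: "(nat \<Rightarrow> pt \<Rightarrow> real) \<Rightarrow> nat \<Rightarrow> pt \<Rightarrow> real fls" where
  "Bser u n p = kpos ((Lser u p) ^ n)"

end

(*
  Eliminating the x-derivatives between the s-flows of L and M and the canonical relation
  {L, M} = 1 gives P_k = P (M_s L_k - M_k L_s).  Since M is an explicit function of L and s,
  the dependence through L cancels in this Jacobian, leaving
  P_k / P = (N L^(-1) + sum_i (d v_i / ds) L^(-i-1)) L_k.
  The series E = L^N exp(- sum_m (1/m) (d v_m / ds) L^(-m)) satisfies the same equation, so P / E
  does not depend on k; both have leading term k^N, hence P = E.
  Derivatives in s are taken coefficientwise; for the term sum_i v_i L^(-i-1) this requires a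
  chain rule for compositions of power series in which both factors depend on s.
*)
theory Submission
  imports Defs
begin

unbundle fps_syntax

subsection \<open>Coefficientwise derivatives of one-parameter families of Laurent series\<close>

definition fls_has_deriv :: "('a::real_normed_field \<Rightarrow> 'a fls) \<Rightarrow> 'a fls \<Rightarrow> 'a \<Rightarrow> bool" where
  "fls_has_deriv A D y0 \<longleftrightarrow> (\<forall>j. ((\<lambda>y. A y $$ j) has_field_derivative D $$ j) (at y0))"

text \<open>A uniform lower bound on the subdegree makes every coefficient of a product a finite sum
  over a range independent of the parameter; this is what the product rule needs.\<close>
definition vanishes_below :: "int \<Rightarrow> ('b \<Rightarrow> 'a::zero fls) \<Rightarrow> bool" where
  "vanishes_below K A \<longleftrightarrow> (\<forall>y j. j < K \<longrightarrow> A y $$ j = 0)"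

lemma fls_has_deriv_unique: "fls_has_deriv A D1 y0 \<Longrightarrow> fls_has_deriv A D2 y0 \<Longrightarrow> D1 = D2"
  unfolding fls_has_deriv_def by (intro fls_eqI) (meson DERIV_unique)

lemma fls_has_deriv_nth_below:
  assumes "vanishes_below K A" "fls_has_deriv A D y0" "j < K"
  shows "D $$ j = 0"
proof -
  have "((\<lambda>y. A y $$ j) has_field_derivative D $$ j) (at y0)"
    using assms(2) fls_has_deriv_def by blast
  moreover have "(\<lambda>y. A y $$ j) = (\<lambda>y. 0)"
    using assms(1,3) by (simp add: vanishes_below_def)
  ultimately show ?thesis
    using DERIV_const DERIV_unique by metis
qed

lemma fls_has_deriv_const: "fls_has_deriv (\<lambda>y. c) 0 y0"
  unfolding fls_has_deriv_def by simp

lemma fls_has_deriv_add: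
  "fls_has_deriv A DA y0 \<Longrightarrow> fls_has_deriv B DB y0 \<Longrightarrow> fls_has_deriv (\<lambda>y. A y + B y) (DA + DB) y0"
  unfolding fls_has_deriv_def by (auto intro: derivative_intros)

lemma fls_has_deriv_fls_const:
  "(f has_field_derivative f') (at y0) \<Longrightarrow> fls_has_deriv (\<lambda>y. fls_const (f y)) (fls_const f') y0"
  unfolding fls_has_deriv_def by (auto intro: derivative_intros)

lemma fls_has_deriv_sum:
  "finite S \<Longrightarrow> (\<And>i. i \<in> S \<Longrightarrow> fls_has_deriv (A i) (D i) y0) \<Longrightarrow>
    fls_has_deriv (\<lambda>y. \<Sum>i\<in>S. A i y) (\<Sum>i\<in>S. D i) y0"
  unfolding fls_has_deriv_def fls_nth_sum by (auto intro!: DERIV_sum)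

lemma fls_has_deriv_deriv:
  assumes "vanishes_below K A" "\<And>j. (\<lambda>y. A y $$ j) field_differentiable (at y0)"
  shows "fls_has_deriv A (Abs_fls (\<lambda>j. deriv (\<lambda>y. A y $$ j) y0)) y0"
proof -
  have "Abs_fls (\<lambda>j. deriv (\<lambda>y. A y $$ j) y0) $$ j = deriv (\<lambda>y. A y $$ j) y0" for j
    by (rule nth_Abs_fls_lower_bound[of K]) (use assms(1) in \<open>simp add: vanishes_below_def\<close>)
  then show ?thesis
    using assms(2) by (simp add: fls_has_deriv_def DERIV_deriv_iff_field_differentiable)
qed

lemma vanishes_below_fls_const: "vanishes_below 0 (\<lambda>y. fls_const (f y))"
  unfolding vanishes_below_def by simp

lemma vanishes_below_fps_to_fls: "vanishes_below 0 (\<lambda>y. fps_to_fls (g y))"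
  unfolding vanishes_below_def by simp

lemma vanishes_below_fps_to_fls_1:
  "(\<And>y. g y $ 0 = 0) \<Longrightarrow> vanishes_below 1 (\<lambda>y. fps_to_fls (g y))"
  unfolding vanishes_below_def by (auto simp: not_less)

lemma fls_times_nth_vanishes_below:
  fixes a b :: "'a::comm_ring_1 fls"
  assumes a: "\<And>i. i < K1 \<Longrightarrow> a $$ i = 0" and b: "\<And>i. i < K2 \<Longrightarrow> b $$ i = 0"
  shows "(a * b) $$ n = (\<Sum>i=K1..n-K2. a $$ i * b $$ (n - i))"
proof (cases "a = 0 \<or> b = 0")
  case True
  then show ?thesis by auto
next
  case False
  have K1: "K1 \<le> fls_subdegree a"
    using a False nth_fls_subdegree_nonzero by (metis not_less)
  have K2: "K2 \<le> fls_subdegree b"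
    using b False nth_fls_subdegree_nonzero by (metis not_less)
  have "(a * b) $$ n = (\<Sum>i=fls_subdegree a..n - fls_subdegree b. a $$ i * b $$ (n - i))"
    by (rule fls_times_nth(2))
  also have "\<dots> = (\<Sum>i=K1..n-K2. a $$ i * b $$ (n - i))"
    using K1 K2 by (intro sum.mono_neutral_left) (auto simp: fls_eq0_below_subdegree)
  finally show ?thesis .
qed

lemma fls_times_nth_cong:
  fixes a b d :: "'a::comm_ring_1 fls"
  assumes ab: "\<And>i. i \<le> n - K \<Longrightarrow> a $$ i = b $$ i" and d: "\<And>i. i < K \<Longrightarrow> d $$ i = 0"
  shows "(a * d) $$ n = (b * d) $$ n"
proof -
  define K1 where "K1 = min (fls_subdegree a) (fls_subdegree b)"
  have "\<And>i. i < K1 \<Longrightarrow> a $$ i = 0" "\<And>i. i < K1 \<Longrightarrow> b $$ i = 0"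
    unfolding K1_def by (auto intro: fls_eq0_below_subdegree)
  then show ?thesis
    using ab d by (simp add: fls_times_nth_vanishes_below[of K1 _ K])
qed

lemma vanishes_below_mult:
  fixes A B :: "'b \<Rightarrow> 'a::comm_ring_1 fls"
  assumes "vanishes_below K1 A" "vanishes_below K2 B"
  shows "vanishes_below (K1 + K2) (\<lambda>y. A y * B y)"
  unfolding vanishes_below_def
proof (intro allI impI)
  fix y j assume "j < K1 + K2"
  moreover have "(A y * B y) $$ j = (\<Sum>i=K1..j-K2. A y $$ i * B y $$ (j - i))"
    using assms by (intro fls_times_nth_vanishes_below) (auto simp: vanishes_below_def)
  ultimately show "(A y * B y) $$ j = 0" by simp
qed

lemma vanishes_below_power:
  fixes A :: "'b \<Rightarrow> 'a::comm_ring_1 fls"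
  assumes "vanishes_below K A"
  shows "vanishes_below (int m * K) (\<lambda>y. A y ^ m)"
proof (induction m)
  case 0
  then show ?case by (simp add: vanishes_below_def)
next
  case (Suc m)
  then have "vanishes_below (K + int m * K) (\<lambda>y. A y * A y ^ m)"
    using assms by (intro vanishes_below_mult)
  then show ?case by (simp add: algebra_simps)
qed

lemma fls_has_deriv_mult:
  assumes A: "vanishes_below K1 A" and B: "vanishes_below K2 B"
    and dA: "fls_has_deriv A DA y0" and dB: "fls_has_deriv B DB y0"
  shows "fls_has_deriv (\<lambda>y. A y * B y) (DA * B y0 + A y0 * DB) y0"
  unfolding fls_has_deriv_def
proof
  fix n
  have AB: "(A y * B y) $$ n = (\<Sum>i=K1..n-K2. A y $$ i * B y $$ (n - i))" for y
    using A B unfolding vanishes_below_def by (intro fls_times_nth_vanishes_below) auto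
  have "DA $$ i = 0" if "i < K1" for i
    using fls_has_deriv_nth_below[OF A dA that] .
  moreover have "DB $$ i = 0" if "i < K2" for i
    using fls_has_deriv_nth_below[OF B dB that] .
  ultimately have D: "(DA * B y0 + A y0 * DB) $$ n
      = (\<Sum>i=K1..n-K2. DA $$ i * B y0 $$ (n - i) + A y0 $$ i * DB $$ (n - i))"
    using A B unfolding vanishes_below_def
    by (simp add: fls_times_nth_vanishes_below[of K1 _ K2] sum.distrib)
  have "((\<lambda>y. \<Sum>i=K1..n-K2. A y $$ i * B y $$ (n - i)) has_field_derivative
        (\<Sum>i=K1..n-K2. DA $$ i * B y0 $$ (n - i) + A y0 $$ i * DB $$ (n - i))) (at y0)"
    using dA dB unfolding fls_has_deriv_def by (intro DERIV_sum) (auto intro!: derivative_eq_intros)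
  then show "((\<lambda>y. (A y * B y) $$ n) has_field_derivative (DA * B y0 + A y0 * DB) $$ n) (at y0)"
    unfolding AB D .
qed

lemma fls_has_deriv_power:
  assumes A: "vanishes_below K A" and dA: "fls_has_deriv A D y0"
  shows "fls_has_deriv (\<lambda>y. A y ^ m) (of_nat m * A y0 ^ (m - 1) * D) y0"
proof (induction m)
  case 0
  then show ?case using fls_has_deriv_const[of 1 y0] by simp
next
  case (Suc m)
  have "fls_has_deriv (\<lambda>y. A y * A y ^ m) (D * A y0 ^ m + A y0 * (of_nat m * A y0 ^ (m - 1) * D)) y0"
    by (rule fls_has_deriv_mult[OF A vanishes_below_power[OF A] dA Suc.IH])
  moreover have "D * A y0 ^ m + A y0 * (of_nat m * A y0 ^ (m - 1) * D)
      = of_nat (Suc m) * A y0 ^ (Suc m - 1) * D"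
    by (cases m) (auto simp: algebra_simps)
  ultimately show ?case by simp
qed

lemma fls_nth_fps_compose_truncate:
  fixes f g :: "'a::comm_ring_1 fps"
  assumes g0: "g $ 0 = 0" and nK: "n \<le> int K"
  shows "fps_to_fls (f oo g) $$ n = (\<Sum>j\<le>K. fls_const (f $ j) * fps_to_fls g ^ j) $$ n"
proof (cases "n < 0")
  case False
  have "(f oo g) $ nat n = (\<Sum>j\<in>{0..nat n}. f $ j * (g ^ j) $ nat n)"
    by (rule fps_compose_nth)
  also have "\<dots> = (\<Sum>j\<le>K. f $ j * (g ^ j) $ nat n)"
    using nK startsby_zero_power_prefix[OF g0] by (intro sum.mono_neutral_left) auto
  finally show ?thesis
    using False by (simp add: fls_nth_sum flip: fps_to_fls_power)
qed (simp add: fls_nth_sum flip: fps_to_fls_power)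

lemma fls_has_deriv_truncated_compose:
  fixes c g :: "'a::real_normed_field \<Rightarrow> 'a fps"
  assumes g0: "\<And>y. g y $ 0 = 0"
    and dc: "\<And>i. ((\<lambda>y. c y $ i) has_field_derivative c' $ i) (at y0)"
    and dg: "fls_has_deriv (\<lambda>y. fps_to_fls (g y)) Dg y0"
  shows "fls_has_deriv (\<lambda>y. \<Sum>j\<le>Suc m. fls_const (c y $ j) * fps_to_fls (g y) ^ j)
    ((\<Sum>j\<le>Suc m. fls_const (c' $ j) * fps_to_fls (g y0) ^ j)
      + (\<Sum>j\<le>m. fls_const (fps_deriv (c y0) $ j) * fps_to_fls (g y0) ^ j) * Dg) y0"
proof -
  define G where "G y = fps_to_fls (g y)" for y
  have G0: "vanishes_below 0 G"
    unfolding G_def by (rule vanishes_below_fps_to_fls)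
  have shift: "fls_const (c y0 $ Suc j) * (of_nat (Suc j) * G y0 ^ j * Dg)
      = fls_const (fps_deriv (c y0) $ j) * G y0 ^ j * Dg" for j
    by (simp only: fls_of_nat mult.assoc[symmetric] fls_const_mult_const)
      (simp add: fps_deriv_nth mult.commute)
  have "fls_has_deriv (\<lambda>y. \<Sum>j\<le>Suc m. fls_const (c y $ j) * G y ^ j)
      (\<Sum>j\<le>Suc m. fls_const (c' $ j) * G y0 ^ j + fls_const (c y0 $ j) * (of_nat j * G y0 ^ (j - 1) * Dg)) y0"
    by (intro fls_has_deriv_sum fls_has_deriv_mult[OF vanishes_below_fls_const vanishes_below_power[OF G0]]
        fls_has_deriv_fls_const dc fls_has_deriv_power[OF G0 dg[folded G_def]]) simp
  moreover have "(\<Sum>j\<le>Suc m. fls_const (c y0 $ j) * (of_nat j * G y0 ^ (j - 1) * Dg))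
      = (\<Sum>j\<le>m. fls_const (fps_deriv (c y0) $ j) * G y0 ^ j) * Dg"
    unfolding sum_distrib_right sum.atMost_Suc_shift diff_Suc_1 shift by simp
  ultimately show ?thesis
    unfolding sum.distrib G_def by simp
qed

lemma fls_has_deriv_fps_compose:
  fixes c g :: "'a::real_normed_field \<Rightarrow> 'a fps"
  assumes g0: "\<And>y. g y $ 0 = 0"
    and dc: "\<And>i. ((\<lambda>y. c y $ i) has_field_derivative c' $ i) (at y0)"
    and dg: "fls_has_deriv (\<lambda>y. fps_to_fls (g y)) Dg y0"
  shows "fls_has_deriv (\<lambda>y. fps_to_fls (c y oo g y))
     (fps_to_fls (c' oo g y0) + fps_to_fls (fps_deriv (c y0) oo g y0) * Dg) y0"
  unfolding fls_has_deriv_def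
proof
  fix n :: int
  define m where "m = nat n"
  \<comment> \<open>Up to order n, c oo g agrees with the composition of a truncation of c, a polynomial in g.\<close>
  define T where "T y = (\<Sum>j\<le>Suc m. fls_const (c y $ j) * fps_to_fls (g y) ^ j)" for y
  define A where "A = (\<Sum>j\<le>Suc m. fls_const (c' $ j) * fps_to_fls (g y0) ^ j)"
  define B where "B = (\<Sum>j\<le>m. fls_const (fps_deriv (c y0) $ j) * fps_to_fls (g y0) ^ j)"
  have "fls_has_deriv T (A + B * Dg) y0"
    unfolding T_def A_def B_def using g0 dc dg by (rule fls_has_deriv_truncated_compose)
  then have dT: "((\<lambda>y. T y $$ n) has_field_derivative (A + B * Dg) $$ n) (at y0)"
    unfolding fls_has_deriv_def by blast
  have "vanishes_below 1 (\<lambda>y. fps_to_fls (g y))"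
    using g0 by (rule vanishes_below_fps_to_fls_1)
  then have Dg1: "Dg $$ i = 0" if "i < 1" for i
    using fls_has_deriv_nth_below dg that by blast
  have "T y $$ n = fps_to_fls (c y oo g y) $$ n" for y
    unfolding T_def m_def using g0 by (intro fls_nth_fps_compose_truncate[symmetric]) auto
  moreover have "A $$ n = fps_to_fls (c' oo g y0) $$ n"
    unfolding A_def m_def using g0 by (intro fls_nth_fps_compose_truncate[symmetric]) auto
  moreover have "(B * Dg) $$ n = (fps_to_fls (fps_deriv (c y0) oo g y0) * Dg) $$ n"
    unfolding B_def m_def using g0 Dg1
    by (intro fls_times_nth_cong[of n 1] fls_nth_fps_compose_truncate[symmetric]) auto
  ultimately show "((\<lambda>y. fps_to_fls (c y oo g y) $$ n) has_field_derivative
      (fps_to_fls (c' oo g y0) + fps_to_fls (fps_deriv (c y0) oo g y0) * Dg) $$ n) (at y0)"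
    using dT by simp
qed

lemma fps_inverse_nth_field_differentiable:
  fixes f :: "'a::real_normed_field \<Rightarrow> 'a fps"
  assumes f0: "\<And>y. f y $ 0 = 1" and df: "\<And>i. (\<lambda>y. f y $ i) field_differentiable (at y0)"
  shows "(\<lambda>y. inverse (f y) $ n) field_differentiable (at y0)"
proof -
  have "inverse (f y) $ n = fps_right_inverse_constructor (f y) 1 n" for y
    unfolding fps_inverse_def by (simp add: f0)
  moreover have "(\<lambda>y. fps_right_inverse_constructor (f y) 1 n) field_differentiable (at y0)"
  proof (induction n rule: less_induct)
    case (less n)
    show ?case
    proof (cases n)
      case (Suc k)
      have "(\<lambda>y. - 1 * (\<Sum>i\<in>{1..n}. f y $ i * fps_right_inverse_constructor (f y) 1 (n - i)))
          field_differentiable (at y0)"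
        using less df Suc by (intro derivative_intros) auto
      then show ?thesis
        using Suc by simp
    qed simp
  qed
  ultimately show ?thesis by simp
qed

lemma dk_add: "dk (a + b) = dk a + dk b"
  unfolding dk_def by (simp add: algebra_simps)

lemma dk_mult: "dk (a * b) = dk a * b + a * dk b"
  unfolding dk_def by (simp add: algebra_simps)

lemma dk_fls_const: "dk (fls_const c) = 0"
  unfolding dk_def by simp

lemma dk_power: "dk (a ^ m) = of_nat m * a ^ (m - 1) * dk a"
  unfolding dk_def fls_deriv_power by (simp add: algebra_simps)

lemma dk_sum: "dk (\<Sum>i\<in>S. f i) = (\<Sum>i\<in>S. dk (f i))"
  unfolding dk_def fls_deriv_sum by (simp add: sum_distrib_left)

lemma dk_inverse: "dk (inverse a) = - (inverse a)\<^sup>2 * dk a"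
  unfolding dk_def fls_inverse_deriv by (simp add: algebra_simps)

lemma dk_fps_compose:
  "g $ 0 = 0 \<Longrightarrow> dk (fps_to_fls (c oo g)) = fps_to_fls (fps_deriv c oo g) * dk (fps_to_fls g)"
  unfolding dk_def fls_deriv_fps_to_fls fps_compose_deriv
  by (simp add: fls_times_fps_to_fls algebra_simps)

lemma log_dk_eq_imp_eq:
  assumes E: "E \<noteq> 0" and dP: "dk P = P * H" and dE: "dk E = E * H"
    and nth_eq: "P $$ n = E $$ n" and nth_nz: "E $$ n \<noteq> 0"
  shows "P = E"
proof -
  define c where "c = P / E"
  have P: "P = c * E"
    unfolding c_def using E by simp
  have "P * H = dk c * E + P * H"
    using dP dE unfolding dk_mult P by (simp add: algebra_simps)
  then have "dk c = 0"
    using E by simp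
  then have c: "c = fls_const (c $$ 0)"
    unfolding dk_def by (simp add: fls_deriv_eq_0_iff[symmetric])
  then have "P $$ n = c $$ 0 * E $$ n"
    using P by (metis fls_mult_const_nth(1))
  then have "c $$ 0 = 1"
    using nth_eq nth_nz by simp
  then show ?thesis
    using P c by simp
qed

lemma eliminate_x_derivatives:
  fixes P Pk Px Ls Lk Lx Ms Mk Mx :: "'a::comm_ring_1"
  assumes "Ls * P = Pk * Lx - Px * Lk" "Ms * P = Pk * Mx - Px * Mk" "Lk * Mx - Lx * Mk = 1"
  shows "P * (Ms * Lk - Mk * Ls) = Pk"
proof -
  have "P * (Ms * Lk - Mk * Ls) = Lk * (Ms * P) - Mk * (Ls * P)"
    by (simp add: algebra_simps)
  also have "\<dots> = Pk * (Lk * Mx - Lx * Mk)"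
    unfolding assms(1,2) by (simp add: algebra_simps)
  finally show ?thesis
    unfolding assms(3) by simp
qed

definition Lser_fps :: "(nat \<Rightarrow> pt \<Rightarrow> real) \<Rightarrow> pt \<Rightarrow> real fps" where
  "Lser_fps u q = Abs_fps (\<lambda>k. if k = 0 then 1 else if k = 1 then 0 else u k q)"

definition Lser_inv_fps :: "(nat \<Rightarrow> pt \<Rightarrow> real) \<Rightarrow> pt \<Rightarrow> real fps" where
  "Lser_inv_fps u q = fps_X * inverse (Lser_fps u q)"

lemma Lser_nth: "Lser u q $$ j = (if j = -1 then 1 else if j \<ge> 1 then u (nat j + 1) q else 0)"
  unfolding Lser_def by (auto simp: nat_eq_iff)

lemma Lser_eq: "Lser u q = fls_X_inv * fps_to_fls (Lser_fps u q)"
  by (rule fls_eqI)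
    (auto simp: Lser_nth fls_X_inv_times_conv_shift Lser_fps_def nat_add_distrib nat_eq_iff)

lemma Lser_fps_nth_0 [simp]: "Lser_fps u q $ 0 = 1"
  unfolding Lser_fps_def by simp

lemma Lser_inv_fps_nth_0 [simp]: "Lser_inv_fps u q $ 0 = 0"
  unfolding Lser_inv_fps_def by simp

lemma inverse_Lser: "inverse (Lser u q) = fps_to_fls (Lser_inv_fps u q)"
proof -
  have "subdegree (Lser_fps u q) = 0"
    by (simp add: subdegree_eq_0_iff)
  then have "inverse (Lser u q) = fls_X * fps_to_fls (inverse (Lser_fps u q))"
    unfolding Lser_eq by (simp add: inverse_mult_distrib fls_inverse_X_inv fls_inverse_fps_to_fls)
  then show ?thesis
    unfolding Lser_inv_fps_def by (simp add: fls_times_fps_to_fls)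
qed

lemma Wser_Lser: "Wser (Lser u q) = Lser_inv_fps u q"
  unfolding Wser_def inverse_Lser by simp

lemma Lser_nonzero: "Lser u q \<noteq> 0"
  using Lser_nth[of u q "-1"] by auto

lemma Lser_times_inv_fps: "Lser u q * fps_to_fls (Lser_inv_fps u q) = 1"
  using Lser_nonzero by (simp flip: inverse_Lser)

lemma dk_Lser_inv_fps: "dk (fps_to_fls (Lser_inv_fps u q)) = - (fps_to_fls (Lser_inv_fps u q))\<^sup>2 * dk (Lser u q)"
  unfolding inverse_Lser[symmetric] by (rule dk_inverse)

lemma Lser_power_times_fps_nth:
  "h $ 0 = 1 \<Longrightarrow> (Lser u q ^ N * fps_to_fls h) $$ (- int N) = 1"
proof -
  assume h0: "h $ 0 = 1"
  have "Lser u q ^ N * fps_to_fls h = fls_X_inv ^ N * fps_to_fls (Lser_fps u q ^ N * h)"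
    unfolding Lser_eq power_mult_distrib by (simp add: fps_to_fls_power fls_times_fps_to_fls mult_ac)
  also have "\<dots> = fls_shift (int N) (fps_to_fls (Lser_fps u q ^ N * h))"
    by (rule fls_X_inv_power_times_conv_shift(1))
  finally show ?thesis
    using h0 by (simp add: fps_nth_power_0)
qed

subsection \<open>Derivatives in s\<close>

lemma fpder_VS_eqI:
  assumes "fls_has_deriv (\<lambda>y. F (x, t, y)) D s"
  shows "fpder VS F (x, t, s) = D"
proof -
  have "pder VS (\<lambda>q. F q $$ j) (x, t, s) = D $$ j" for j
    using assms unfolding fls_has_deriv_def pder_def by (simp add: DERIV_imp_deriv)
  then show ?thesis
    unfolding fpder_def by (simp add: fls_nth_inverse)
qed

lemma vanishes_below_Lser: "vanishes_below (-1) (\<lambda>y. Lser u (x, t, y))"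
  unfolding vanishes_below_def Lser_nth by auto

lemma fls_has_deriv_Lser:
  assumes du: "\<And>n. 2 \<le> n \<Longrightarrow> (\<lambda>y. u n (x, t, y)) field_differentiable (at s)"
  shows "fls_has_deriv (\<lambda>y. Lser u (x, t, y)) (fpder VS (Lser u) (x, t, s)) s"
proof -
  have "(\<lambda>y. Lser u (x, t, y) $$ j) field_differentiable (at s)" for j
    using du[of "nat j + 1"] by (cases "j = -1"; cases "1 \<le> j") (simp_all add: Lser_nth)
  then have "fls_has_deriv (\<lambda>y. Lser u (x, t, y))
      (Abs_fls (\<lambda>j. deriv (\<lambda>y. Lser u (x, t, y) $$ j) s)) s"
    by (rule fls_has_deriv_deriv[OF vanishes_below_Lser])
  then show ?thesis
    using fpder_VS_eqI by metis
qed

lemma fls_has_deriv_Lser_inv: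
  assumes du: "\<And>n. 2 \<le> n \<Longrightarrow> (\<lambda>y. u n (x, t, y)) field_differentiable (at s)"
  defines "W \<equiv> fps_to_fls (Lser_inv_fps u (x, t, s))"
  shows "fls_has_deriv (\<lambda>y. fps_to_fls (Lser_inv_fps u (x, t, y)))
    (- W\<^sup>2 * fpder VS (Lser u) (x, t, s)) s"
proof -
  define Ws where "Ws = Abs_fls (\<lambda>j. deriv (\<lambda>y. fps_to_fls (Lser_inv_fps u (x, t, y)) $$ j) s)"
  define Ls where "Ls = fpder VS (Lser u) (x, t, s)"
  have "(\<lambda>y. Lser_fps u (x, t, y) $ i) field_differentiable (at s)" for i
    unfolding Lser_fps_def using du[of i] by (cases "i = 0 \<or> i = 1") auto
  then have "(\<lambda>y. inverse (Lser_fps u (x, t, y)) $ i) field_differentiable (at s)" for i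
    by (intro fps_inverse_nth_field_differentiable) simp
  then have "(\<lambda>y. fps_to_fls (Lser_inv_fps u (x, t, y)) $$ j) field_differentiable (at s)" for j
    unfolding Lser_inv_fps_def by (cases "j < 0"; cases "j = 0") (simp_all add: fps_X_mult_nth)
  then have dW: "fls_has_deriv (\<lambda>y. fps_to_fls (Lser_inv_fps u (x, t, y))) Ws s"
    unfolding Ws_def by (intro fls_has_deriv_deriv[OF vanishes_below_fps_to_fls])
  have "fls_has_deriv (\<lambda>y. Lser u (x, t, y) * fps_to_fls (Lser_inv_fps u (x, t, y)))
      (Ls * W + Lser u (x, t, s) * Ws) s"
    unfolding Ls_def W_def
    by (rule fls_has_deriv_mult[OF vanishes_below_Lser vanishes_below_fps_to_fls fls_has_deriv_Lser[OF du] dW])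
  moreover have "fls_has_deriv (\<lambda>y. Lser u (x, t, y) * fps_to_fls (Lser_inv_fps u (x, t, y))) 0 s"
    unfolding Lser_times_inv_fps by (rule fls_has_deriv_const)
  ultimately have LW': "Ls * W + Lser u (x, t, s) * Ws = 0"
    by (rule fls_has_deriv_unique)
  have LW: "W * Lser u (x, t, s) = 1"
    unfolding W_def using Lser_times_inv_fps by (simp add: mult.commute)
  have "Ws = W * Lser u (x, t, s) * Ws"
    unfolding LW by simp
  also have "\<dots> = W * (Ls * W + Lser u (x, t, s) * Ws) - W\<^sup>2 * Ls"
    by (simp add: algebra_simps power2_eq_square)
  finally have "Ws = - W\<^sup>2 * Ls"
    unfolding LW' by simp
  then show ?thesis
    using dW unfolding Ls_def by simp
qed

lemma pdiffble_VS_imp_field_differentiable: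
  "pdiffble VS f (x, t, s) \<Longrightarrow> (\<lambda>y. f (x, t, y)) field_differentiable (at s)"
  unfolding pdiffble_def
  by (simp flip: DERIV_deriv_iff_field_differentiable DERIV_deriv_iff_real_differentiable)

definition fps_pos_coeffs :: "(nat \<Rightarrow> 'a::zero) \<Rightarrow> 'a fps" where
  "fps_pos_coeffs c = Abs_fps (\<lambda>i. if i = 0 then 0 else c i)"

lemma Mser_eq:
  "Mser N u v (x, t, y) =
    (\<Sum>n\<in>{n. 1 \<le> n \<and> t n \<noteq> 0}. fls_const (of_nat n * t n) * Lser u (x, t, y) ^ (n - 1))
    + fls_const x + fls_const (of_nat N * y) * fps_to_fls (Lser_inv_fps u (x, t, y))
    + fps_to_fls (Lser_inv_fps u (x, t, y))
      * fps_to_fls (fps_pos_coeffs (\<lambda>i. v i (x, t, y)) oo Lser_inv_fps u (x, t, y))"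
  unfolding Mser_def negsum_def inverse_Lser Wser_Lser fps_pos_coeffs_def by simp

lemma fls_has_deriv_Mser:
  assumes du: "\<And>n. 2 \<le> n \<Longrightarrow> (\<lambda>y. u n (x, t, y)) field_differentiable (at s)"
    and dv: "\<And>n. 1 \<le> n \<Longrightarrow> (\<lambda>y. v n (x, t, y)) field_differentiable (at s)"
    and fin: "finite {n. t n \<noteq> 0}"
  defines "Ls \<equiv> fpder VS (Lser u) (x, t, s)"
    and "g \<equiv> Lser_inv_fps u (x, t, s)" and "W \<equiv> fps_to_fls (Lser_inv_fps u (x, t, s))"
    and "Ws \<equiv> - (fps_to_fls (Lser_inv_fps u (x, t, s)))\<^sup>2 * fpder VS (Lser u) (x, t, s)"
    and "V \<equiv> fps_pos_coeffs (\<lambda>i. v i (x, t, s))"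
    and "Vs \<equiv> fps_pos_coeffs (\<lambda>i. pder VS (v i) (x, t, s))"
    and "T' \<equiv> (\<Sum>n\<in>{n. 1 \<le> n \<and> t n \<noteq> 0}.
      fls_const (of_nat n * t n) * (of_nat (n - 1) * Lser u (x, t, s) ^ (n - 2)))"
  shows "fls_has_deriv (\<lambda>y. Mser N u v (x, t, y))
    (T' * Ls + (of_nat N * W + fls_const (of_nat N * s) * Ws)
      + (Ws * fps_to_fls (V oo g) + W * (fps_to_fls (Vs oo g) + fps_to_fls (fps_deriv V oo g) * Ws))) s"
proof -
  define L where "L = Lser u (x, t, s)"
  have finS: "finite {n. 1 \<le> n \<and> t n \<noteq> 0}"
    using fin by (rule rev_finite_subset) auto
  have dL: "fls_has_deriv (\<lambda>y. Lser u (x, t, y)) Ls s"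
    unfolding Ls_def by (rule fls_has_deriv_Lser[OF du])
  have dW: "fls_has_deriv (\<lambda>y. fps_to_fls (Lser_inv_fps u (x, t, y))) Ws s"
    unfolding Ws_def W_def by (rule fls_has_deriv_Lser_inv[OF du])
  have "((\<lambda>y. fps_pos_coeffs (\<lambda>i. v i (x, t, y)) $ i) has_field_derivative Vs $ i) (at s)" for i
    using dv[of i] unfolding fps_pos_coeffs_def Vs_def pder_def
    by (cases "i = 0") (simp_all add: DERIV_deriv_iff_field_differentiable)
  then have dR: "fls_has_deriv (\<lambda>y. fps_to_fls (fps_pos_coeffs (\<lambda>i. v i (x, t, y)) oo Lser_inv_fps u (x, t, y)))
      (fps_to_fls (Vs oo g) + fps_to_fls (fps_deriv V oo g) * Ws) s"
    unfolding g_def V_def by (intro fls_has_deriv_fps_compose[OF _ _ dW]) simp_all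
  have dN: "fls_has_deriv (\<lambda>y. fls_const (of_nat N * y)) (of_nat N) s"
    unfolding fls_of_nat by (intro fls_has_deriv_fls_const) (auto intro!: derivative_eq_intros)
  have "fls_has_deriv (\<lambda>y. Mser N u v (x, t, y))
    ((\<Sum>n\<in>{n. 1 \<le> n \<and> t n \<noteq> 0}. 0 * L ^ (n - 1) + fls_const (of_nat n * t n) * (of_nat (n - 1) * L ^ (n - 1 - 1) * Ls))
      + 0 + (of_nat N * W + fls_const (of_nat N * s) * Ws)
      + (Ws * fps_to_fls (V oo g) + W * (fps_to_fls (Vs oo g) + fps_to_fls (fps_deriv V oo g) * Ws))) s"
    unfolding Mser_eq L_def W_def g_def V_def
    by (intro fls_has_deriv_add fls_has_deriv_sum finS fls_has_deriv_const
        fls_has_deriv_mult[OF vanishes_below_fls_const vanishes_below_power[OF vanishes_below_Lser]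
          fls_has_deriv_const fls_has_deriv_power[OF vanishes_below_Lser dL]]
        fls_has_deriv_mult[OF vanishes_below_fls_const vanishes_below_fps_to_fls dN dW]
        fls_has_deriv_mult[OF vanishes_below_fps_to_fls vanishes_below_fps_to_fls dW dR[unfolded g_def V_def]])
  then show ?thesis
    unfolding T'_def L_def by (simp add: sum_distrib_right mult.assoc diff_diff_add numeral_2_eq_2)
qed

lemma fps_pos_coeffs_eq_X_times_deriv:
  fixes a :: "nat \<Rightarrow> 'a::field_char_0"
  shows "fps_pos_coeffs a
    = - (fps_X * fps_deriv (Abs_fps (\<lambda>m. if m = 0 then 0 else - (1 / of_nat m) * a m)))"
  by (rule fps_ext) (auto simp: fps_pos_coeffs_def fps_deriv_nth fps_X_mult_nth)

lemma Mser_Lser_jacobian: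
  assumes du: "\<And>n. 2 \<le> n \<Longrightarrow> (\<lambda>y. u n (x, t, y)) field_differentiable (at s)"
    and dv: "\<And>n. 1 \<le> n \<Longrightarrow> (\<lambda>y. v n (x, t, y)) field_differentiable (at s)"
    and fin: "finite {n. t n \<noteq> 0}"
  defines "g \<equiv> Lser_inv_fps u (x, t, s)" and "W \<equiv> fps_to_fls (Lser_inv_fps u (x, t, s))"
    and "C \<equiv> Abs_fps (\<lambda>m. if m = 0 then 0 else - (1 / of_nat m) * pder VS (v m) (x, t, s))"
  shows "fpder VS (Mser N u v) (x, t, s) * dk (Lser u (x, t, s))
      - dk (Mser N u v (x, t, s)) * fpder VS (Lser u) (x, t, s)
    = (of_nat N * W - W\<^sup>2 * fps_to_fls (fps_deriv C oo g)) * dk (Lser u (x, t, s))"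
proof -
  define L where "L = Lser u (x, t, s)"
  define Ls where "Ls = fpder VS (Lser u) (x, t, s)"
  define V where "V = fps_pos_coeffs (\<lambda>i. v i (x, t, s))"
  define Vs where "Vs = fps_pos_coeffs (\<lambda>i. pder VS (v i) (x, t, s))"
  define R where "R = fps_to_fls (V oo g)"
  define Q where "Q = fps_to_fls (fps_deriv V oo g)"
  define T' where "T' = (\<Sum>n\<in>{n. 1 \<le> n \<and> t n \<noteq> 0}. fls_const (of_nat n * t n) * (of_nat (n - 1) * L ^ (n - 2)))"
  have Ms: "fpder VS (Mser N u v) (x, t, s) = T' * Ls + (of_nat N * W + fls_const (of_nat N * s) * (- W\<^sup>2 * Ls))
      + ((- W\<^sup>2 * Ls) * R + W * (fps_to_fls (Vs oo g) + Q * (- W\<^sup>2 * Ls)))"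
    unfolding g_def W_def Vs_def V_def T'_def L_def Ls_def R_def Q_def
    by (rule fpder_VS_eqI[OF fls_has_deriv_Mser[OF du dv fin]])
  have Mk: "dk (Mser N u v (x, t, s)) = T' * dk L + fls_const (of_nat N * s) * (- W\<^sup>2 * dk L)
      + ((- W\<^sup>2 * dk L) * R + W * (Q * (- W\<^sup>2 * dk L)))"
    unfolding Mser_eq T'_def L_def W_def g_def V_def R_def Q_def
    by (simp add: dk_add dk_mult dk_fls_const dk_sum dk_power dk_fps_compose dk_Lser_inv_fps
        sum_distrib_right mult.assoc numeral_2_eq_2 diff_diff_add)
  have Vs: "fps_to_fls (Vs oo g) = - W * fps_to_fls (fps_deriv C oo g)"
    unfolding Vs_def W_def C_def fps_pos_coeffs_eq_X_times_deriv fps_compose_uminus g_def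
      fps_compose_mult_distrib[OF Lser_inv_fps_nth_0] fps_X_fps_compose_startby0[OF Lser_inv_fps_nth_0]
    by (simp add: fls_times_fps_to_fls)
  show ?thesis
    unfolding Ms Mk Vs L_def Ls_def by (simp add: algebra_simps power2_eq_square)
qed

subsection \<open>The exponential\<close>

lemma dk_power_times_exp_compose:
  fixes C g :: "real fps" and L :: "real fls"
  assumes g0: "g $ 0 = 0" and C0: "C $ 0 = 0" and N: "0 < N" and LW: "L * fps_to_fls g = 1"
  defines "W \<equiv> fps_to_fls g" and "E \<equiv> L ^ N * fps_to_fls (fps_exp 1 oo (C oo g))"
  shows "dk E = E * ((of_nat N * W - W\<^sup>2 * fps_to_fls (fps_deriv C oo g)) * dk L)"
proof -
  define F where "F = fps_to_fls (fps_exp 1 oo (C oo g))"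
  have W: "W = inverse L"
    using LW unfolding W_def by (simp add: inverse_unique)
  have LN: "L ^ (N - 1) = L ^ N * W"
  proof -
    have "L ^ N * W = L ^ (N - 1) * (L * W)"
      using N by (cases N) (auto simp: mult_ac)
    then show ?thesis
      using LW unfolding W_def by simp
  qed
  have Cg0: "(C oo g) $ 0 = 0"
    using C0 by simp
  have dF: "dk F = F * (fps_to_fls (fps_deriv C oo g) * dk W)"
    unfolding F_def W_def dk_fps_compose[OF Cg0] dk_fps_compose[OF g0] by (simp add: mult_ac)
  have "dk E = of_nat N * L ^ (N - 1) * dk L * F + L ^ N * dk F"
    unfolding E_def F_def[symmetric] dk_mult dk_power ..
  also have "\<dots> = E * ((of_nat N * W - W\<^sup>2 * fps_to_fls (fps_deriv C oo g)) * dk L)"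
    unfolding dF LN E_def F_def[symmetric] W dk_inverse by (simp add: algebra_simps)
  finally show ?thesis .
qed

theorem mainTheorem4:
  fixes N :: nat
    and u v pc :: "nat \<Rightarrow> pt \<Rightarrow> real"
  assumes N_pos: "0 < N"
    and diff_u: "\<And>n w p. 2 \<le> n \<Longrightarrow> admissible w \<Longrightarrow> p \<in> ptdom \<Longrightarrow> pdiffble w (u n) p"
    and diff_v: "\<And>n w p. 1 \<le> n \<Longrightarrow> admissible w \<Longrightarrow> p \<in> ptdom \<Longrightarrow> pdiffble w (v n) p"
    and diff_p: "\<And>j w p. j < N \<Longrightarrow> admissible w \<Longrightarrow> p \<in> ptdom \<Longrightarrow> pdiffble w (pc j) p"
    and Lax_L: "\<And>n p. 1 \<le> n \<Longrightarrow> p \<in> ptdom \<Longrightarrow>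
        fpder (VT n) (Lser u) p = pbr (Bser u n) (Lser u) p"
    and Lax_M: "\<And>n p. 1 \<le> n \<Longrightarrow> p \<in> ptdom \<Longrightarrow>
        fpder (VT n) (Mser N u v) p = pbr (Bser u n) (Mser N u v) p"
    and canon: "\<And>p. p \<in> ptdom \<Longrightarrow> pbr (Lser u) (Mser N u v) p = 1"
    and s_L: "\<And>p. p \<in> ptdom \<Longrightarrow>
        fpder VS (Lser u) p * Pser N pc p = pbr (Pser N pc) (Lser u) p"
    and s_M: "\<And>p. p \<in> ptdom \<Longrightarrow>
        fpder VS (Mser N u v) p * Pser N pc p = pbr (Pser N pc) (Mser N u v) p"
    and s_B: "\<And>n p. 1 \<le> n \<Longrightarrow> p \<in> ptdom \<Longrightarrow>
        - (fpder VS (Bser u n) p * Pser N pc p)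
          = - fpder (VT n) (Pser N pc) p - pbr (Pser N pc) (Bser u n) p"
  shows "\<forall>p\<in>ptdom. Pser N pc p =
      (Lser u p) ^ N * fps_to_fls (fps_exp 1 oo
         (Abs_fps (\<lambda>m. if m = 0 then 0 else - (1 / of_nat m) * pder VS (v m) p) oo Wser (Lser u p)))"
proof
  fix p assume p: "p \<in> ptdom"
  obtain x t s where p_eq: "p = (x, t, s)"
    by (cases p) auto
  have fin: "finite {n. t n \<noteq> 0}"
    using p unfolding p_eq ptdom_def by simp
  have du: "\<And>n. 2 \<le> n \<Longrightarrow> (\<lambda>y. u n (x, t, y)) field_differentiable (at s)"
    using diff_u p unfolding p_eq admissible_def by (simp add: pdiffble_VS_imp_field_differentiable)
  have dv: "\<And>n. 1 \<le> n \<Longrightarrow> (\<lambda>y. v n (x, t, y)) field_differentiable (at s)"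
    using diff_v p unfolding p_eq admissible_def by (simp add: pdiffble_VS_imp_field_differentiable)
  define g where "g = Lser_inv_fps u p"
  define W where "W = fps_to_fls g"
  define C where "C = Abs_fps (\<lambda>m. if m = 0 then 0 else - (1 / of_nat m) * pder VS (v m) p)"
  define H where "H = (of_nat N * W - W\<^sup>2 * fps_to_fls (fps_deriv C oo g)) * dk (Lser u p)"
  define E where "E = Lser u p ^ N * fps_to_fls (fps_exp 1 oo (C oo g))"
  have "fpder VS (Mser N u v) p * dk (Lser u p) - dk (Mser N u v p) * fpder VS (Lser u) p = H"
    unfolding H_def W_def C_def g_def p_eq by (rule Mser_Lser_jacobian[OF du dv fin])
  then have dP: "dk (Pser N pc p) = Pser N pc p * H"
    using eliminate_x_derivatives[OF s_L[OF p, unfolded pbr_def] s_M[OF p, unfolded pbr_def]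
        canon[OF p, unfolded pbr_def]] by simp
  have dE: "dk E = E * H"
    unfolding E_def H_def W_def g_def
    by (rule dk_power_times_exp_compose) (simp_all add: C_def N_pos Lser_times_inv_fps)
  have E_nth: "E $$ (- int N) = 1"
    unfolding E_def by (rule Lser_power_times_fps_nth) simp
  have "Pser N pc p = E"
    by (rule log_dk_eq_imp_eq[OF _ dP dE, of "- int N"]) (use E_nth in \<open>auto simp: Pser_def fls_nth_sum\<close>)
  then show "Pser N pc p = Lser u p ^ N * fps_to_fls (fps_exp 1 oo
      (Abs_fps (\<lambda>m. if m = 0 then 0 else - (1 / of_nat m) * pder VS (v m) p) oo Wser (Lser u p)))"
    unfolding E_def C_def g_def Wser_Lser .
qed

end
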